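(* Let $r, s, m, n$ be positive integers, and let $f: V(H_{n,m}) \rightarrow \{-r,s\}$ be a function. If there are directed $m$-paths $P$ and $Q$ in $H_{n,m}$ such that $f(V(P)) < f(V(Q))$, then for any $p \in L(r,s,m)$ with $f(V(P)) \le p \le f(V(Q))$ there is a directed $m$-path $P^*$ in $H_{n,m}$ such that $f(V(P^* )) = p$.
   Context: For a set $Y$ of vertices, $f(Y)=\sum_{y\in Y}f(y)$. $H_{n,m}$ is the directed graph whose vertex set is the disjoint union of $V_1,\dots,V_m$ with $|V_i|=n$, and whose arc set is $\bigcup_{i=1}^{m-1}\{(v,w): v\in V_i, w\in V_{i+1}\}$. A directed $m$-path is a directed path with $m$ vertices. $L(r,s,m)=\{-rx+sy : x,y\in\mathbb{Z}, x,y\ge 0, x+y=m\}$. *)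

theory Defs
  imports Main
begin

text \<open>Vertices of H_{n,m}: pairs (i, j) with layer i in {1..m} and index j in {1..n};
  V_i = {i} x {1..n}.\<close>
definition H_verts :: "nat \<Rightarrow> nat \<Rightarrow> (nat \<times> nat) set" where
  "H_verts n m = {1..m} \<times> {1..n}"

definition H_arc :: "nat \<Rightarrow> nat \<Rightarrow> nat \<times> nat \<Rightarrow> nat \<times> nat \<Rightarrow> bool" where
  "H_arc n m v w \<longleftrightarrow> v \<in> H_verts n m \<and> w \<in> H_verts n m \<and> fst w = fst v + 1"

definition H_dipath :: "nat \<Rightarrow> nat \<Rightarrow> (nat \<times> nat) list \<Rightarrow> bool" where
  "H_dipath n m P \<longleftrightarrow> P \<noteq> [] \<and> distinct P \<and> set P \<subseteq> H_verts n m \<and>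
     (\<forall>i. i + 1 < length P \<longrightarrow> H_arc n m (P ! i) (P ! (i + 1)))"

definition H_dipath_k :: "nat \<Rightarrow> nat \<Rightarrow> nat \<Rightarrow> (nat \<times> nat) list \<Rightarrow> bool" where
  "H_dipath_k n m k P \<longleftrightarrow> H_dipath n m P \<and> length P = k"

definition L_set :: "int \<Rightarrow> int \<Rightarrow> nat \<Rightarrow> int set" where
  "L_set r s m = {- r * int x + s * int y | x y. x + y = m}"

end

theory Submission
  imports Defs
begin

text \<open>A directed m-path in H_{n,m} has exactly one vertex in each layer, visited in order, so it is
  the graph of an arbitrary choice function c from layers to {1..n}; conversely every such choice
  is a path. Switching the choice of P to that of Q one layer at a time moves the weight by at most
  r + s per step, and every weight is congruent to -r m, hence to each p \<in> L(r,s,m), modulo r + s.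
  An upward step of at most r + s inside one residue class mod r + s cannot jump over p.\<close>

definition layer_path :: "nat \<Rightarrow> (nat \<Rightarrow> nat) \<Rightarrow> (nat \<times> nat) list" where
  "layer_path m c = map (\<lambda>i. (Suc i, c i)) [0..<m]"

lemma H_dipath_k_nth:
  assumes "H_dipath_k n m m P" "i < m"
  shows "fst (P ! i) = Suc i \<and> snd (P ! i) \<in> {1..n}"
proof -
  have len: "length P = m" and sub: "set P \<subseteq> H_verts n m"
    and arcs: "\<And>j. j + 1 < m \<Longrightarrow> H_arc n m (P ! j) (P ! (j + 1))"
    using assms(1) unfolding H_dipath_k_def H_dipath_def by auto
  have vert: "fst (P ! j) \<in> {1..m} \<and> snd (P ! j) \<in> {1..n}" if "j < m" for j
  proof -
    have "P ! j \<in> {1..m} \<times> {1..n}" using sub nth_mem[of j P] that len unfolding H_verts_def by auto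
    then show ?thesis by (simp add: mem_Times_iff)
  qed
  have shift: "fst (P ! j) = fst (P ! 0) + j" if "j < m" for j
    using that by (induction j) (use arcs in \<open>auto simp: H_arc_def\<close>)
  have "fst (P ! 0) = 1"
    using shift[of "m - 1"] vert[of "m - 1"] vert[of 0] assms(2) by auto
  then show ?thesis using shift[OF assms(2)] vert[OF assms(2)] by simp
qed

lemma H_dipath_k_eq_layer_path:
  assumes "H_dipath_k n m m P"
  shows "P = layer_path m (\<lambda>i. snd (P ! i))"
proof (rule nth_equalityI)
  show "length P = length (layer_path m (\<lambda>i. snd (P ! i)))"
    using assms by (simp add: H_dipath_k_def layer_path_def)
next
  fix i assume "i < length P"
  then have "i < m" using assms by (simp add: H_dipath_k_def)
  with H_dipath_k_nth[OF assms this] show "P ! i = layer_path m (\<lambda>i. snd (P ! i)) ! i"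
    by (simp add: layer_path_def prod_eq_iff)
qed

lemma H_dipath_k_layer_path:
  assumes "m > 0" "\<forall>i<m. c i \<in> {1..n}"
  shows "H_dipath_k n m m (layer_path m c)"
  using assms unfolding H_dipath_k_def H_dipath_def H_arc_def layer_path_def H_verts_def
  by (auto simp: distinct_map inj_on_def)

lemma sum_set_layer_path:
  "sum f (set (layer_path m c)) = (\<Sum>i<m. f (Suc i, c i))"
proof -
  have "set (layer_path m c) = (\<lambda>i. (Suc i, c i)) ` {..<m}"
    unfolding layer_path_def by auto
  moreover have "inj_on (\<lambda>i. (Suc i, c i)) {..<m}" by (auto simp: inj_on_def)
  ultimately show ?thesis by (simp add: sum.reindex)
qed

lemma two_valued_sum_dvd:
  fixes r s :: int
  assumes "finite A" "\<forall>i\<in>A. g i \<in> {-r, s}"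
  shows "(r + s) dvd sum g A + r * int (card A)"
  using assms
proof (induction A rule: finite_induct)
  case (insert a A)
  then have "sum g (insert a A) + r * int (card (insert a A))
      = (sum g A + r * int (card A)) + (g a + r)" by (simp add: algebra_simps)
  moreover have "(r + s) dvd g a + r" using insert.prems by (auto simp: add.commute)
  moreover have "(r + s) dvd sum g A + r * int (card A)" using insert by simp
  ultimately show ?case by (metis dvd_add)
qed simp

lemma L_set_dvd:
  assumes "p \<in> L_set r s m"
  shows "(r + s) dvd p + r * int m"
proof -
  obtain x y where "x + y = m" "p = - r * int x + s * int y"
    using assms unfolding L_set_def by auto
  then have "p + r * int m = (r + s) * int y" by (auto simp: algebra_simps)
  then show ?thesis by simp
qed

lemma int_walk_hits_residue:
  fixes g :: "nat \<Rightarrow> int" and d p :: int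
  assumes "g 0 \<le> p" "p \<le> g m" "d > 0"
    and "\<forall>k<m. g (Suc k) \<le> g k + d"
    and "\<forall>k\<le>m. d dvd p - g k"
  shows "\<exists>k\<le>m. g k = p"
  using assms(2,4,5)
proof (induction m)
  case (Suc m)
  show ?case
  proof (cases "p \<le> g m")
    case True
    with Suc show ?thesis by (metis le_SucI less_SucI le_Suc_eq)
  next
    case False
    have "d dvd p - g m" using Suc.prems(3) by simp
    then have "d \<le> p - g m" using False dvd_imp_le_int[of "p - g m" d] \<open>d > 0\<close> by simp
    then have "g (Suc m) = p" using Suc.prems(1,2) by force
    then show ?thesis by blast
  qed
qed (use assms(1) in auto)

lemma sum_switch_step:
  fixes h :: "nat \<Rightarrow> nat \<Rightarrow> int"
  assumes "k < m" "h k (b k) \<le> h k (a k) + d"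
  shows "(\<Sum>i<m. h i (if i < Suc k then b i else a i))
           \<le> (\<Sum>i<m. h i (if i < k then b i else a i)) + d"
proof -
  have split: "(\<Sum>i<m. h i (if i < j then b i else a i))
      = (\<Sum>i\<in>{..<m} - {k}. h i (if i < j then b i else a i)) + h k (if k < j then b k else a k)"
    for j using assms(1) by (simp add: sum.remove[of "{..<m}" k] add.commute)
  have "(\<Sum>i\<in>{..<m} - {k}. h i (if i < Suc k then b i else a i))
      = (\<Sum>i\<in>{..<m} - {k}. h i (if i < k then b i else a i))"
    by (rule sum.cong) auto
  then show ?thesis using split[of k] split[of "Suc k"] assms(2) by simp
qed

theorem lemma4p2:
  fixes r s :: int and m n :: nat and f :: "nat \<times> nat \<Rightarrow> int"
    and P Q :: "(nat \<times> nat) list" and p :: int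
  assumes "r > 0" "s > 0" "m > 0" "n > 0"
    and "\<forall>v \<in> H_verts n m. f v \<in> {-r, s}"
    and "H_dipath_k n m m P" "H_dipath_k n m m Q"
    and "sum f (set P) < sum f (set Q)"
    and "p \<in> L_set r s m"
    and "sum f (set P) \<le> p" "p \<le> sum f (set Q)"
  shows "\<exists>P'. H_dipath_k n m m P' \<and> sum f (set P') = p"
proof -
  define a where "a i = snd (P ! i)" for i
  define b where "b i = snd (Q ! i)" for i
  define c where "c k i = (if i < k then b i else a i)" for k i
  define g where "g k = sum f (set (layer_path m (c k)))" for k
  have c_range: "\<forall>i<m. c k i \<in> {1..n}" for k
    using H_dipath_k_nth[OF assms(6)] H_dipath_k_nth[OF assms(7)] by (simp add: a_def b_def c_def)
  have f_range: "\<forall>i\<in>{..<m}. f (Suc i, c k i) \<in> {-r, s}" for k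
    using assms(5) c_range[of k] by (simp add: H_verts_def)
  have "c 0 = a" "\<forall>i<m. c m i = b i" by (auto simp: c_def)
  then have "g 0 = sum f (set P)" "g m = sum f (set Q)"
    using H_dipath_k_eq_layer_path[OF assms(6)] H_dipath_k_eq_layer_path[OF assms(7)]
    by (simp_all add: g_def sum_set_layer_path flip: a_def b_def)
  moreover have "f (Suc k, b k) \<le> f (Suc k, a k) + (r + s)" if "k < m" for k
  proof -
    have "f (Suc k, a k) \<in> {-r, s}" "f (Suc k, b k) \<in> {-r, s}"
      using f_range[of 0] f_range[of m] that by (auto simp: c_def)
    then show ?thesis using assms(1,2) by auto
  qed
  then have "\<forall>k<m. g (Suc k) \<le> g k + (r + s)"
    by (auto simp: g_def c_def sum_set_layer_path intro!: sum_switch_step)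
  moreover have "(r + s) dvd p - g k" for k
  proof -
    have "(r + s) dvd g k + r * int m"
      using two_valued_sum_dvd[OF _ f_range[of k]] by (simp add: g_def sum_set_layer_path)
    from dvd_diff[OF L_set_dvd[OF assms(9)] this] show ?thesis by simp
  qed
  ultimately obtain k where "g k = p"
    using int_walk_hits_residue[of g p m "r + s"] assms(1,2,10,11) by auto
  then show ?thesis
    using H_dipath_k_layer_path[OF assms(3) c_range] by (auto simp: g_def)
qed

end
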